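(* Let $y_0\in E$ and let $u$ be a positive solution of $0=\tfrac12b^2u''+\tilde au'+\eta u-u^2-d\frac{(u')^2}{u}$ on $[y_0,\infty)$ with $u(y)/\eta(y)\to1$ as $y\to\infty$. Assume that on $[y_0,\infty)$: $\eta\in C^2$, $\eta>0$, $\Psi\eta\le1$, $\tilde a\le0$, and $\bar a:=\frac{\tilde a}{\eta}+(b^2-2d)\frac{\eta'}{\eta^2}\le-C$ for some constant $C>0$; that $\Psi\eta$ is strictly increasing on $[y_0,\infty)$; and that $\eta(y)\to\infty$, $\Psi\eta(y)\to1$ and $\eta'(y)/\eta(y)\to0$ as $y\to\infty$. Then $u'(y)/u(y)\to0$ as $y\to\infty$.
   Context: $E=(E_-,\infty)$ with $E_-\in\{-\infty\}\cup\mathbb R$. $r,\lambda,\sigma,a,b,\rho,\delta:E\to\mathbb R$ are locally Lipschitz with $\sigma>0$, $b(y)\neq0$, $\rho(y)\in[-1,1]$; $R\in(0,\infty)\setminus\{1\}$. Define $\eta=\frac1R\big(\delta-(1-R)(r+\frac{\lambda^2}{2R})\big)$, $\tilde a=a+\frac{1-R}{R}\rho\lambda b$, $d=\frac12b^2((1-\rho^2)R+\rho^2+1)$, and for positive $g\in C^2$, $\Psi g=1+\frac{\frac12b^2g''+\tilde ag'}{g^2}-d\frac{(g')^2}{g^3}$. *)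

theory Defs
  imports "HOL-Analysis.Analysis"
begin

text \<open>The state space E = (E_-, infinity), with E_- in {-infinity} union R, encoded by an extended real.\<close>
definition Espace :: "ereal \<Rightarrow> real set" where
  "Espace Em = {y. Em < ereal y}"

definition loc_lipschitz_on :: "real set \<Rightarrow> (real \<Rightarrow> real) \<Rightarrow> bool" where
  "loc_lipschitz_on S f \<longleftrightarrow>
     (\<forall>x\<in>S. \<exists>e>0. \<exists>L. \<forall>y\<in>ball x e \<inter> S. \<forall>z\<in>ball x e \<inter> S. \<bar>f y - f z\<bar> \<le> L * \<bar>y - z\<bar>)"

definition eta_fun :: "real \<Rightarrow> (real \<Rightarrow> real) \<Rightarrow> (real \<Rightarrow> real) \<Rightarrow> (real \<Rightarrow> real) \<Rightarrow> real \<Rightarrow> real" where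
  "eta_fun R r lam delta y = (1 / R) * (delta y - (1 - R) * (r y + (lam y)\<^sup>2 / (2 * R)))"

definition atilde_fun :: "real \<Rightarrow> (real \<Rightarrow> real) \<Rightarrow> (real \<Rightarrow> real) \<Rightarrow> (real \<Rightarrow> real) \<Rightarrow> (real \<Rightarrow> real) \<Rightarrow> real \<Rightarrow> real" where
  "atilde_fun R a rho lam b y = a y + (1 - R) / R * rho y * lam y * b y"

definition d_fun :: "real \<Rightarrow> (real \<Rightarrow> real) \<Rightarrow> (real \<Rightarrow> real) \<Rightarrow> real \<Rightarrow> real" where
  "d_fun R b rho y = 1/2 * (b y)\<^sup>2 * ((1 - (rho y)\<^sup>2) * R + (rho y)\<^sup>2 + 1)"

text \<open>Psi g, with g' and g'' supplied as the (first and second) derivatives of g.\<close>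
definition Psi_fun :: "(real \<Rightarrow> real) \<Rightarrow> (real \<Rightarrow> real) \<Rightarrow> (real \<Rightarrow> real) \<Rightarrow> (real \<Rightarrow> real)
    \<Rightarrow> (real \<Rightarrow> real) \<Rightarrow> (real \<Rightarrow> real) \<Rightarrow> real \<Rightarrow> real" where
  "Psi_fun b ta d g g1 g2 y =
     1 + (1/2 * (b y)\<^sup>2 * g2 y + ta y * g1 y) / (g y)\<^sup>2 - d y * (g1 y)\<^sup>2 / (g y) ^ 3"

end

theory Submission
  imports Defs
begin

text \<open>
  For v = u'/u the equation for u becomes the Riccati equation
  v' = (2/b^2) ((d - b^2/2) v^2 - atilde v + u - \<eta>),
  and L = ln u - ln \<eta> satisfies L' = v - \<eta>'/\<eta> with L \<longrightarrow> 0 and \<eta>'/\<eta> \<longrightarrow> 0, so late in the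
  half-line v cannot keep a fixed sign and size over an interval of fixed length.
  If v \<ge> \<epsilon> at a late point, then u/\<eta> \<approx> 1 and the bound abar \<le> -C make v' > 0 wherever
  v \<ge> \<epsilon>, so v stays above \<epsilon>. If v \<le> -\<epsilon>, then v' < M v^2 with M = 2(R + 1), and comparison
  with the solution -1/(1/\<epsilon> + M (y - y1)) of g' = M g^2 keeps v below -\<epsilon>/2 for a time 1/(M \<epsilon>).
  Either way L would move by a fixed amount.
\<close>

lemma nonneg_if_deriv_pos_at_zeros:
  fixes f f' :: "real \<Rightarrow> real"
  assumes deriv: "\<And>t. t \<in> {a..b} \<Longrightarrow> (f has_real_derivative f' t) (at t)"
    and start: "0 \<le> f a"
    and zeros: "\<And>t. t \<in> {a..b} \<Longrightarrow> f t = 0 \<Longrightarrow> 0 < f' t"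
    and x: "x \<in> {a..b}"
  shows "0 \<le> f x"
proof (rule ccontr)
  assume neg: "\<not> 0 \<le> f x"
  have cont: "continuous_on {a..x} f"
    using deriv x by (intro continuous_at_imp_continuous_on) (metis DERIV_isCont atLeastAtMost_iff order_trans)
  define Z where "Z = {a..x} \<inter> f -` {0}"
  have "closed Z"
    unfolding Z_def by (rule continuous_closed_preimage[OF cont]) auto
  then have compact: "compact Z"
    unfolding Z_def by (metis Int_assoc Int_absorb compact_Int_closed compact_Icc)
  obtain z where "a \<le> z" "z \<le> x" "f z = 0"
    using IVT2'[of f x 0 a] neg start x cont by auto
  then have "Z \<noteq> {}" unfolding Z_def by auto
  then obtain s where s: "s \<in> Z" and s_last: "\<forall>t\<in>Z. t \<le> s"
    using compact_attains_sup[OF compact] by blast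
  have s_x: "a \<le> s" "s < x" "f s = 0"
    using s neg unfolding Z_def by (auto simp: order.order_iff_strict)
  have s_ab: "s \<in> {a..b}"
    using s_x x by auto
  \<comment> \<open>f crosses its last zero s upwards, so it must vanish again before becoming negative at x\<close>
  obtain e where e: "0 < e" "\<forall>h>0. h < e \<longrightarrow> f s < f (s + h)"
    using DERIV_pos_inc_right[OF deriv[OF s_ab] zeros[OF s_ab \<open>f s = 0\<close>]] by blast
  define h where "h = min (e / 2) (x - s)"
  have h: "0 < h" "s + h \<le> x" "0 < f (s + h)"
    using e s_x unfolding h_def by auto
  have "continuous_on {s + h..x} f"
    using h s_x by (intro continuous_on_subset[OF cont]) auto
  then obtain t where "s + h \<le> t" "t \<le> x" "f t = 0"
    using IVT2'[of f x 0 "s + h"] neg h by auto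
  moreover have "t \<in> Z"
    using calculation h s_x unfolding Z_def by auto
  ultimately show False
    using s_last h by fastforce
qed

lemma ge_on_interval_if_increasing_above:
  fixes v v' :: "real \<Rightarrow> real"
  assumes deriv: "\<And>t. t \<in> {a..b} \<Longrightarrow> (v has_real_derivative v' t) (at t)"
    and start: "c \<le> v a"
    and increasing: "\<And>t. t \<in> {a..b} \<Longrightarrow> c \<le> v t \<Longrightarrow> 0 < v' t"
    and x: "x \<in> {a..b}"
  shows "c \<le> v x"
proof -
  have "0 \<le> v x - c"
    by (rule nonneg_if_deriv_pos_at_zeros[where f' = v'])
      (use assms in \<open>auto intro!: derivative_eq_intros\<close>)
  then show ?thesis by simp
qed

lemma le_on_interval_by_riccati_comparison:
  fixes v v' :: "real \<Rightarrow> real"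
  assumes "0 < M" "0 < \<epsilon>"
    and deriv: "\<And>t. t \<in> {a..a + 1 / (M * \<epsilon>)} \<Longrightarrow> (v has_real_derivative v' t) (at t)"
    and start: "v a \<le> -\<epsilon>"
    and riccati: "\<And>t. t \<in> {a..a + 1 / (M * \<epsilon>)} \<Longrightarrow> v t \<le> -\<epsilon>/2 \<Longrightarrow> v' t < M * (v t)\<^sup>2"
    and x: "x \<in> {a..a + 1 / (M * \<epsilon>)}"
  shows "v x \<le> -\<epsilon>/2"
proof -
  \<comment> \<open>the solution of g' = M g^2 with g a = -\<epsilon>, which stays below -\<epsilon>/2 up to time a + 1/(M \<epsilon>)\<close>
  define g where "g t = - (1 / (1/\<epsilon> + M * (t - a)))" for t
  have denom: "0 < 1/\<epsilon> + M * (t - a)" "1/\<epsilon> + M * (t - a) \<le> 2/\<epsilon>"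
    if "t \<in> {a..a + 1 / (M * \<epsilon>)}" for t
  proof -
    have "0 \<le> M * (t - a)" "M * (t - a) \<le> M * (1 / (M * \<epsilon>))"
      using that \<open>0 < M\<close> by (auto intro!: mult_left_mono simp del: times_divide_eq_right)
    then show "0 < 1/\<epsilon> + M * (t - a)" "1/\<epsilon> + M * (t - a) \<le> 2/\<epsilon>"
      using \<open>0 < M\<close> \<open>0 < \<epsilon>\<close> by (simp_all add: add_pos_nonneg)
  qed
  have g_le: "g t \<le> -\<epsilon>/2" if "t \<in> {a..a + 1 / (M * \<epsilon>)}" for t
  proof -
    have "1 / (2/\<epsilon>) \<le> 1 / (1/\<epsilon> + M * (t - a))"
      using denom[OF that] \<open>0 < \<epsilon>\<close> by (intro divide_left_mono) auto
    then show ?thesis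
      unfolding g_def by simp
  qed
  have g_deriv: "(g has_real_derivative M * (g t)\<^sup>2) (at t)" if "t \<in> {a..a + 1 / (M * \<epsilon>)}" for t
    using denom(1)[OF that] unfolding g_def
    by (auto intro!: derivative_eq_intros simp: power2_eq_square)
  have "0 \<le> g x - v x"
  proof (rule nonneg_if_deriv_pos_at_zeros[where f = "\<lambda>t. g t - v t" and f' = "\<lambda>t. M * (g t)\<^sup>2 - v' t"])
    show "((\<lambda>t. g t - v t) has_real_derivative M * (g t)\<^sup>2 - v' t) (at t)"
      if "t \<in> {a..a + 1 / (M * \<epsilon>)}" for t
      using g_deriv[OF that] deriv[OF that] by (rule DERIV_diff)
    show "0 \<le> g a - v a"
      using start \<open>0 < \<epsilon>\<close> by (simp add: g_def)
    show "0 < M * (g t)\<^sup>2 - v' t" if "t \<in> {a..a + 1 / (M * \<epsilon>)}" "g t - v t = 0" for t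
      using riccati[OF that(1)] g_le[OF that(1)] that(2) by simp
  qed (use x in auto)
  with g_le[OF x] show ?thesis
    by simp
qed

lemma eventually_small_value_in_intervals:
  fixes v w L :: "real \<Rightarrow> real"
  assumes L_deriv: "\<And>y. y0 < y \<Longrightarrow> (L has_real_derivative v y - w y) (at y)"
    and L_lim: "(L \<longlongrightarrow> l) at_top"
    and w_lim: "(w \<longlongrightarrow> 0) at_top"
    and "0 < T" "0 < c"
  shows "\<forall>\<^sub>F y in at_top. \<exists>z\<in>{y<..<y + T}. \<bar>v z\<bar> < c"
proof -
  have "\<forall>\<^sub>F y in at_top. y0 < y \<and> \<bar>L y - l\<bar> < T * c / 4 \<and> \<bar>w y\<bar> < c / 2"
    using eventually_gt_at_top tendstoD[OF L_lim, of "T * c / 4"] tendstoD[OF w_lim, of "c / 2"]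
      \<open>0 < T\<close> \<open>0 < c\<close>
    by (auto simp: dist_real_def intro!: eventually_conj)
  then obtain Y where Y: "\<And>y. Y \<le> y \<Longrightarrow> y0 < y \<and> \<bar>L y - l\<bar> < T * c / 4 \<and> \<bar>w y\<bar> < c / 2"
    unfolding eventually_at_top_linorder by blast
  show ?thesis
    unfolding eventually_at_top_linorder
  proof (intro exI allI impI)
    fix y assume "Y \<le> y"
    obtain z where z: "y < z" "z < y + T" "L (y + T) - L y = (y + T - y) * (v z - w z)"
      using MVT2[of y "y + T" L "\<lambda>t. v t - w t"] \<open>0 < T\<close> Y[OF \<open>Y \<le> y\<close>] L_deriv by force
    have "\<bar>L y - l\<bar> < T * c / 4" "\<bar>L (y + T) - l\<bar> < T * c / 4"
      using Y[of y] Y[of "y + T"] \<open>Y \<le> y\<close> \<open>0 < T\<close> by auto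
    then have "\<bar>L (y + T) - L y\<bar> < T * c / 2"
      unfolding abs_less_iff by linarith
    then have "T * \<bar>v z - w z\<bar> < T * (c / 2)"
      using z(3) \<open>0 < T\<close> by (simp add: abs_mult)
    then have "\<bar>v z - w z\<bar> < c / 2"
      using \<open>0 < T\<close> by simp
    moreover have "\<bar>w z\<bar> < c / 2"
      using Y[of z] z \<open>Y \<le> y\<close> by auto
    ultimately have "\<bar>v z\<bar> < c"
      unfolding abs_less_iff by linarith
    with z show "\<exists>z\<in>{y<..<y + T}. \<bar>v z\<bar> < c"
      by auto
  qed
qed

lemma tendsto_zero_if_primitive_converges:
  fixes v v' w L :: "real \<Rightarrow> real"
  assumes v_deriv: "\<And>y. y0 < y \<Longrightarrow> (v has_real_derivative v' y) (at y)"
    and L_deriv: "\<And>y. y0 < y \<Longrightarrow> (L has_real_derivative v y - w y) (at y)"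
    and L_lim: "(L \<longlongrightarrow> l) at_top"
    and w_lim: "(w \<longlongrightarrow> 0) at_top"
    and "0 < M"
    and above: "\<And>\<epsilon>. 0 < \<epsilon> \<Longrightarrow> \<forall>\<^sub>F y in at_top. \<epsilon> \<le> v y \<longrightarrow> 0 < v' y"
    and below: "\<And>\<epsilon>. 0 < \<epsilon> \<Longrightarrow> \<forall>\<^sub>F y in at_top. v y \<le> -\<epsilon> \<longrightarrow> v' y < M * (v y)\<^sup>2"
  shows "(v \<longlongrightarrow> 0) at_top"
proof (rule tendstoI)
  fix \<epsilon> :: real
  assume "0 < \<epsilon>"
  define T where "T = 1 / (M * \<epsilon>)"
  have "\<forall>\<^sub>F y in at_top. y0 < y \<and> (\<epsilon> \<le> v y \<longrightarrow> 0 < v' y) \<and> (v y \<le> -\<epsilon>/2 \<longrightarrow> v' y < M * (v y)\<^sup>2)"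
    using eventually_gt_at_top above[OF \<open>0 < \<epsilon>\<close>] below[of "\<epsilon>/2"] \<open>0 < \<epsilon>\<close>
    by (auto intro!: eventually_conj)
  then obtain Y where Y: "\<And>y. Y \<le> y \<Longrightarrow>
      y0 < y \<and> (\<epsilon> \<le> v y \<longrightarrow> 0 < v' y) \<and> (v y \<le> -\<epsilon>/2 \<longrightarrow> v' y < M * (v y)\<^sup>2)"
    unfolding eventually_at_top_linorder by blast
  have "\<forall>\<^sub>F y in at_top. Y \<le> y \<and> (\<exists>z\<in>{y<..<y + 1}. \<bar>v z\<bar> < \<epsilon>) \<and> (\<exists>z\<in>{y<..<y + T}. \<bar>v z\<bar> < \<epsilon>/2)"
    using eventually_ge_at_top
      eventually_small_value_in_intervals[where T = 1 and c = \<epsilon>, OF L_deriv L_lim w_lim]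
      eventually_small_value_in_intervals[where T = T and c = "\<epsilon>/2", OF L_deriv L_lim w_lim]
      \<open>0 < \<epsilon>\<close> \<open>0 < M\<close>
    by (auto simp: T_def intro!: eventually_conj)
  then show "\<forall>\<^sub>F y in at_top. dist (v y) 0 < \<epsilon>"
  proof (rule eventually_mono)
    fix y
    assume y: "Y \<le> y \<and> (\<exists>z\<in>{y<..<y + 1}. \<bar>v z\<bar> < \<epsilon>) \<and> (\<exists>z\<in>{y<..<y + T}. \<bar>v z\<bar> < \<epsilon>/2)"
    then have Yt: "\<And>t. t \<in> {y..} \<Longrightarrow>
        y0 < t \<and> (\<epsilon> \<le> v t \<longrightarrow> 0 < v' t) \<and> (v t \<le> -\<epsilon>/2 \<longrightarrow> v' t < M * (v t)\<^sup>2)"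
      using Y by auto
    have "\<not> \<epsilon> \<le> v y"
    proof
      assume "\<epsilon> \<le> v y"
      obtain z where z: "z \<in> {y<..<y + 1}" "\<bar>v z\<bar> < \<epsilon>"
        using y by blast
      have "\<epsilon> \<le> v z"
        by (rule ge_on_interval_if_increasing_above[where v' = v' and a = y and b = "y + 1"])
          (use z Yt v_deriv \<open>\<epsilon> \<le> v y\<close> in auto)
      with z(2) show False
        by linarith
    qed
    moreover have "\<not> v y \<le> -\<epsilon>"
    proof
      assume "v y \<le> -\<epsilon>"
      obtain z where z: "z \<in> {y<..<y + T}" "\<bar>v z\<bar> < \<epsilon>/2"
        using y by blast
      have "v z \<le> -\<epsilon>/2"
        by (rule le_on_interval_by_riccati_comparison[where v' = v' and a = y and M = M])
          (use z Yt v_deriv \<open>v y \<le> -\<epsilon>\<close> \<open>0 < \<epsilon>\<close> \<open>0 < M\<close> in \<open>auto simp: T_def\<close>)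
      with z(2) show False
        by linarith
    qed
    ultimately show "dist (v y) 0 < \<epsilon>"
      by auto
  qed
qed

lemma riccati_equation_for_log_derivative:
  fixes u u1 :: "real \<Rightarrow> real"
  assumes u_deriv: "(u has_real_derivative u1 y) (at y)"
    and u1_deriv: "(u1 has_real_derivative u2) (at y)"
    and "0 < u y" "B \<noteq> 0"
    and ode: "0 = 1/2 * B\<^sup>2 * u2 + A * u1 y + e * u y - (u y)\<^sup>2 - D * (u1 y)\<^sup>2 / u y"
  shows "((\<lambda>t. u1 t / u t) has_real_derivative
           2 / B\<^sup>2 * ((D - B\<^sup>2/2) * (u1 y / u y)\<^sup>2 - A * (u1 y / u y) + u y - e)) (at y)"
proof -
  define X where "X = D * (u1 y)\<^sup>2 / u y + (u y)\<^sup>2 - e * u y - A * u1 y"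
  have "1/2 * B\<^sup>2 * u2 = X"
    using ode unfolding X_def by linarith
  then have u2: "u2 = 2 * X / B\<^sup>2"
    using \<open>B \<noteq> 0\<close> by (simp add: field_simps)
  have "(u2 * u y - u1 y * u1 y) / (u y)\<^sup>2
      = 2 / B\<^sup>2 * ((D - B\<^sup>2/2) * (u1 y / u y)\<^sup>2 - A * (u1 y / u y) + u y - e)"
    using \<open>0 < u y\<close> \<open>B \<noteq> 0\<close> unfolding u2 X_def by (simp add: field_simps power2_eq_square)
  moreover have "((\<lambda>t. u1 t / u t) has_real_derivative (u2 * u y - u1 y * u1 y) / (u y)\<^sup>2) (at y)"
    using DERIV_quotient[OF u1_deriv u_deriv] \<open>0 < u y\<close> by (simp add: power2_eq_square mult.commute)
  ultimately show ?thesis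
    by simp
qed

lemma riccati_slope_pos_if_ge:
  fixes K A B e u v w C \<epsilon> :: real
  assumes "0 \<le> K" "0 \<le> C" "0 < e" "B \<noteq> 0" "A \<le> 2 * K * w - C * e"
    and "\<epsilon> \<le> v" "2 * \<bar>w\<bar> \<le> \<epsilon>" "\<bar>u - e\<bar> < C * e * \<epsilon>"
  shows "0 < 2 / B\<^sup>2 * (K * v\<^sup>2 - A * v + u - e)"
proof -
  have "A * v \<le> 2 * K * w * v - C * e * v"
    using mult_right_mono[OF assms(5), of v] assms(6,7) by (simp add: algebra_simps)
  moreover have "0 \<le> K * v\<^sup>2 - 2 * K * w * v"
  proof -
    have "0 \<le> K * v * (v - 2 * w)"
      using assms by (intro mult_nonneg_nonneg) auto
    then show ?thesis
      by (simp add: power2_eq_square algebra_simps)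
  qed
  moreover have "C * e * \<epsilon> \<le> C * e * v"
    using assms by (intro mult_left_mono) auto
  ultimately have "0 < K * v\<^sup>2 - A * v + u - e"
    using assms(8) unfolding abs_less_iff by linarith
  then show ?thesis
    using \<open>B \<noteq> 0\<close> by simp
qed

lemma riccati_slope_less_if_le:
  fixes K A B e u v w C M \<epsilon> :: real
  assumes "0 \<le> K" "0 \<le> C" "0 < e" "B \<noteq> 0" "4 * K \<le> M * B\<^sup>2" "A \<le> 2 * K * w - C * e"
    and "v \<le> -\<epsilon>" "2 * \<bar>w\<bar> \<le> \<epsilon>" "\<bar>u - e\<bar> < C * e * \<epsilon>"
  shows "2 / B\<^sup>2 * (K * v\<^sup>2 - A * v + u - e) < M * v\<^sup>2"
proof -
  have "2 * K * w * v - C * e * v \<le> A * v"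
    using mult_right_mono_neg[OF assms(6), of v] assms(7,8) by (simp add: algebra_simps)
  moreover have "- (2 * K * w * v) \<le> K * v\<^sup>2"
  proof -
    have "2 * \<bar>w\<bar> * \<bar>v\<bar> \<le> \<bar>v\<bar> * \<bar>v\<bar>"
      using assms(7,8) by (intro mult_right_mono) auto
    then have "\<bar>2 * w * v\<bar> \<le> v\<^sup>2"
      by (simp add: abs_mult power2_eq_square)
    then have "- (2 * w * v) \<le> v\<^sup>2"
      using abs_ge_minus_self[of "2 * w * v"] by linarith
    then have "K * (- (2 * w * v)) \<le> K * v\<^sup>2"
      using \<open>0 \<le> K\<close> by (rule mult_left_mono)
    then show ?thesis
      by (simp add: algebra_simps)
  qed
  moreover have "C * e * v \<le> - (C * e * \<epsilon>)"
    using assms mult_left_mono[of v "-\<epsilon>" "C * e"] by simp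
  ultimately have "K * v\<^sup>2 - A * v + u - e < 2 * K * v\<^sup>2"
    using assms(9) unfolding abs_less_iff by linarith
  moreover have B2: "0 < B\<^sup>2"
    using \<open>B \<noteq> 0\<close> by simp
  ultimately have "2 / B\<^sup>2 * (K * v\<^sup>2 - A * v + u - e) < 2 / B\<^sup>2 * (2 * K * v\<^sup>2)"
    by (intro mult_strict_left_mono) auto
  also have "\<dots> = 4 * K / B\<^sup>2 * v\<^sup>2"
    by simp
  also have "\<dots> \<le> M * v\<^sup>2"
    using assms(5) B2 by (intro mult_right_mono) (auto simp: pos_divide_le_eq)
  finally show ?thesis .
qed

lemma eventually_abs_diff_less_if_ratio_tendsto_one:
  fixes f g :: "'a \<Rightarrow> real"
  assumes lim: "((\<lambda>x. f x / g x) \<longlongrightarrow> 1) F"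
    and pos: "\<forall>\<^sub>F x in F. 0 < g x"
    and "0 < c"
  shows "\<forall>\<^sub>F x in F. \<bar>f x - g x\<bar> < c * g x"
  using tendstoD[OF lim \<open>0 < c\<close>] pos
proof eventually_elim
  case (elim x)
  have "f x - g x = g x * (f x / g x - 1)"
    using elim(2) by (simp add: field_simps)
  then have "\<bar>f x - g x\<bar> = g x * \<bar>f x / g x - 1\<bar>"
    using elim(2) by (simp add: abs_mult)
  with elim show ?case
    by (simp add: dist_real_def mult.commute)
qed

lemma tendsto_zero_if_riccati_slope:
  fixes v w L u e A B K :: "real \<Rightarrow> real"
  assumes v_deriv: "\<And>y. y0 < y \<Longrightarrow>
      (v has_real_derivative 2 / (B y)\<^sup>2 * (K y * (v y)\<^sup>2 - A y * v y + u y - e y)) (at y)"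
    and L_deriv: "\<And>y. y0 < y \<Longrightarrow> (L has_real_derivative v y - w y) (at y)"
    and L_lim: "(L \<longlongrightarrow> l) at_top"
    and w_lim: "(w \<longlongrightarrow> 0) at_top"
    and u_lim: "((\<lambda>y. u y / e y) \<longlongrightarrow> 1) at_top"
    and coeffs: "\<And>y. y0 < y \<Longrightarrow> 0 \<le> K y \<and> 4 * K y \<le> M * (B y)\<^sup>2 \<and> B y \<noteq> 0 \<and> 0 < e y
      \<and> A y \<le> 2 * K y * w y - C * e y"
    and "0 < C" "0 < M"
  shows "(v \<longlongrightarrow> 0) at_top"
proof -
  have close: "\<forall>\<^sub>F y in at_top. y0 < y \<and> 2 * \<bar>w y\<bar> \<le> \<epsilon> \<and> \<bar>u y - e y\<bar> < C * e y * \<epsilon>"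
    if "0 < \<epsilon>" for \<epsilon>
  proof -
    have "\<forall>\<^sub>F y in at_top. y0 < y"
      by (rule eventually_gt_at_top)
    moreover have "\<forall>\<^sub>F y in at_top. \<bar>w y\<bar> < \<epsilon> / 2"
      using tendstoD[OF w_lim, of "\<epsilon> / 2"] that by (simp add: dist_real_def)
    moreover have "\<forall>\<^sub>F y in at_top. \<bar>u y - e y\<bar> < C * \<epsilon> * e y"
    proof (rule eventually_abs_diff_less_if_ratio_tendsto_one[OF u_lim])
      show "\<forall>\<^sub>F y in at_top. 0 < e y"
        using eventually_gt_at_top[of y0] by (rule eventually_mono) (use coeffs in blast)
      show "0 < C * \<epsilon>"
        using \<open>0 < C\<close> that by simp
    qed
    ultimately show ?thesis
      by eventually_elim (simp add: mult.commute mult.left_commute)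
  qed
  show ?thesis
  proof (rule tendsto_zero_if_primitive_converges[OF v_deriv L_deriv L_lim w_lim \<open>0 < M\<close>])
    fix \<epsilon> :: real
    assume "0 < \<epsilon>"
    show "\<forall>\<^sub>F y in at_top. \<epsilon> \<le> v y \<longrightarrow> 0 < 2 / (B y)\<^sup>2 * (K y * (v y)\<^sup>2 - A y * v y + u y - e y)"
      using close[OF \<open>0 < \<epsilon>\<close>]
    proof (rule eventually_mono, intro impI)
      fix y
      assume "y0 < y \<and> 2 * \<bar>w y\<bar> \<le> \<epsilon> \<and> \<bar>u y - e y\<bar> < C * e y * \<epsilon>" "\<epsilon> \<le> v y"
      then show "0 < 2 / (B y)\<^sup>2 * (K y * (v y)\<^sup>2 - A y * v y + u y - e y)"
        using coeffs[of y] \<open>0 < C\<close>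
        by (intro riccati_slope_pos_if_ge[where w = "w y" and C = C and \<epsilon> = \<epsilon>]) auto
    qed
  next
    fix \<epsilon> :: real
    assume "0 < \<epsilon>"
    show "\<forall>\<^sub>F y in at_top. v y \<le> - \<epsilon> \<longrightarrow>
        2 / (B y)\<^sup>2 * (K y * (v y)\<^sup>2 - A y * v y + u y - e y) < M * (v y)\<^sup>2"
      using close[OF \<open>0 < \<epsilon>\<close>]
    proof (rule eventually_mono, intro impI)
      fix y
      assume "y0 < y \<and> 2 * \<bar>w y\<bar> \<le> \<epsilon> \<and> \<bar>u y - e y\<bar> < C * e y * \<epsilon>" "v y \<le> - \<epsilon>"
      then show "2 / (B y)\<^sup>2 * (K y * (v y)\<^sup>2 - A y * v y + u y - e y) < M * (v y)\<^sup>2"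
        using coeffs[of y] \<open>0 < C\<close>
        by (intro riccati_slope_less_if_le[where w = "w y" and C = C and \<epsilon> = \<epsilon>]) auto
    qed
  qed
qed

lemma log_derivative_tendsto_zero:
  fixes u u1 u2 e e1 A B D :: "real \<Rightarrow> real"
  assumes u_deriv: "\<And>y. y0 < y \<Longrightarrow> (u has_real_derivative u1 y) (at y)"
    and u1_deriv: "\<And>y. y0 < y \<Longrightarrow> (u1 has_real_derivative u2 y) (at y)"
    and e_deriv: "\<And>y. y0 < y \<Longrightarrow> (e has_real_derivative e1 y) (at y)"
    and pos: "\<And>y. y0 < y \<Longrightarrow> 0 < u y \<and> 0 < e y"
    and B: "\<And>y. y0 < y \<Longrightarrow> B y \<noteq> 0"
    and D: "\<And>y. y0 < y \<Longrightarrow> (B y)\<^sup>2 / 2 \<le> D y \<and> 4 * (D y - (B y)\<^sup>2 / 2) \<le> M * (B y)\<^sup>2"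
    and ode: "\<And>y. y0 < y \<Longrightarrow>
      0 = 1/2 * (B y)\<^sup>2 * u2 y + A y * u1 y + e y * u y - (u y)\<^sup>2 - D y * (u1 y)\<^sup>2 / u y"
    and abar: "\<And>y. y0 < y \<Longrightarrow> A y / e y + ((B y)\<^sup>2 - 2 * D y) * e1 y / (e y)\<^sup>2 \<le> - C"
    and "0 < C" "0 < M"
    and u_lim: "((\<lambda>y. u y / e y) \<longlongrightarrow> 1) at_top"
    and e1_lim: "((\<lambda>y. e1 y / e y) \<longlongrightarrow> 0) at_top"
  shows "((\<lambda>y. u1 y / u y) \<longlongrightarrow> 0) at_top"
proof -
  define v where "v = (\<lambda>y. u1 y / u y)"
  define w where "w = (\<lambda>y. e1 y / e y)"
  define K where "K y = D y - (B y)\<^sup>2 / 2" for y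
  have v_deriv: "(v has_real_derivative 2 / (B y)\<^sup>2 * (K y * (v y)\<^sup>2 - A y * v y + u y - e y)) (at y)"
    if "y0 < y" for y
    using riccati_equation_for_log_derivative[OF u_deriv u1_deriv] ode B pos that
    unfolding v_def K_def by blast
  have L_deriv: "((\<lambda>y. ln (u y) - ln (e y)) has_real_derivative v y - w y) (at y)" if "y0 < y" for y
    using pos[OF that] unfolding v_def w_def
    by (auto intro!: derivative_eq_intros u_deriv e_deriv that simp: field_simps)
  have L_lim: "((\<lambda>y. ln (u y) - ln (e y)) \<longlongrightarrow> 0) at_top"
  proof -
    have "((\<lambda>y. ln (u y / e y)) \<longlongrightarrow> ln 1) at_top"
      by (intro tendsto_ln u_lim) simp
    moreover have "\<forall>\<^sub>F y in at_top. ln (u y / e y) = ln (u y) - ln (e y)"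
      using eventually_gt_at_top[of y0]
    proof eventually_elim
      case (elim y)
      with pos[of y] show ?case
        by (simp add: ln_div)
    qed
    ultimately show ?thesis
      by (simp add: tendsto_cong)
  qed
  have coeffs: "0 \<le> K y \<and> 4 * K y \<le> M * (B y)\<^sup>2 \<and> B y \<noteq> 0 \<and> 0 < e y
      \<and> A y \<le> 2 * K y * w y - C * e y" if "y0 < y" for y
  proof -
    have "((B y)\<^sup>2 - 2 * D y) * e1 y / (e y)\<^sup>2 = - (2 * K y * w y) / e y"
      using pos[OF that] unfolding K_def w_def by (simp add: field_simps power2_eq_square)
    then have "(A y - 2 * K y * w y) / e y \<le> - C"
      using abar[OF that] by (simp add: diff_divide_distrib)
    then have "A y \<le> 2 * K y * w y - C * e y"
      using pos[OF that] by (simp add: pos_divide_le_eq algebra_simps)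
    then show ?thesis
      using D[OF that] B[OF that] pos[OF that] unfolding K_def by simp
  qed
  have w_lim: "(w \<longlongrightarrow> 0) at_top"
    using e1_lim unfolding w_def .
  show ?thesis
    using tendsto_zero_if_riccati_slope[OF v_deriv L_deriv L_lim w_lim u_lim coeffs \<open>0 < C\<close> \<open>0 < M\<close>]
    unfolding v_def .
qed

lemma d_fun_bounds:
  assumes "0 \<le> R" "-1 \<le> rho y" "rho y \<le> 1"
  shows "(b y)\<^sup>2 / 2 \<le> d_fun R b rho y"
    and "4 * (d_fun R b rho y - (b y)\<^sup>2 / 2) \<le> 2 * (R + 1) * (b y)\<^sup>2"
proof -
  define P where "P = (1 - (rho y)\<^sup>2) * R + (rho y)\<^sup>2"
  have d: "d_fun R b rho y - (b y)\<^sup>2 / 2 = (b y)\<^sup>2 / 2 * P"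
    unfolding d_fun_def P_def by (simp add: algebra_simps)
  have rho2: "(rho y)\<^sup>2 \<le> 1"
    using assms(2,3) by (simp add: abs_square_le_1)
  have "0 \<le> P"
    unfolding P_def using rho2 assms(1) by simp
  then have "0 \<le> (b y)\<^sup>2 / 2 * P"
    by simp
  with d show "(b y)\<^sup>2 / 2 \<le> d_fun R b rho y"
    by linarith
  have "0 \<le> (rho y)\<^sup>2 * R" "P = R - (rho y)\<^sup>2 * R + (rho y)\<^sup>2"
    using assms(1) unfolding P_def by (simp_all add: algebra_simps)
  with rho2 have "P \<le> R + 1"
    by linarith
  then show "4 * (d_fun R b rho y - (b y)\<^sup>2 / 2) \<le> 2 * (R + 1) * (b y)\<^sup>2"
    unfolding d using mult_right_mono[of P "R + 1" "(b y)\<^sup>2"] by (simp add: algebra_simps)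
qed

theorem theorem4p15:
  fixes Em :: ereal
    and r lam sigma a b rho delta :: "real \<Rightarrow> real"
    and R y0 C :: real
    and u u1 u2 eta1 eta2 :: "real \<Rightarrow> real"
  defines "E \<equiv> Espace Em"
    and "eta \<equiv> eta_fun R r lam delta"
    and "ta \<equiv> atilde_fun R a rho lam b"
    and "d \<equiv> d_fun R b rho"
  assumes Em: "Em \<noteq> \<infinity>"
    and lip: "loc_lipschitz_on E r" "loc_lipschitz_on E lam" "loc_lipschitz_on E sigma"
             "loc_lipschitz_on E a" "loc_lipschitz_on E b" "loc_lipschitz_on E rho"
             "loc_lipschitz_on E delta"
    and sigma_pos: "\<forall>y\<in>E. sigma y > 0"
    and b_nz: "\<forall>y\<in>E. b y \<noteq> 0"
    and rho_bd: "\<forall>y\<in>E. -1 \<le> rho y \<and> rho y \<le> 1"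
    and R: "R > 0" "R \<noteq> 1"
    and y0: "y0 \<in> E"
    \<comment> \<open>u is a positive C^2 solution of the ODE on [y0, infinity)\<close>
    and u_d1: "\<forall>y\<ge>y0. (u has_real_derivative u1 y) (at y within {y0..})"
    and u_d2: "\<forall>y\<ge>y0. (u1 has_real_derivative u2 y) (at y within {y0..})"
    and u2_cont: "continuous_on {y0..} u2"
    and u_pos: "\<forall>y\<ge>y0. u y > 0"
    and u_ode: "\<forall>y\<ge>y0. 0 = 1/2 * (b y)\<^sup>2 * u2 y + ta y * u1 y + eta y * u y - (u y)\<^sup>2
                         - d y * (u1 y)\<^sup>2 / u y"
    and u_lim: "((\<lambda>y. u y / eta y) \<longlongrightarrow> 1) at_top"
    \<comment> \<open>eta is C^2 on [y0, infinity)\<close>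
    and eta_d1: "\<forall>y\<ge>y0. (eta has_real_derivative eta1 y) (at y within {y0..})"
    and eta_d2: "\<forall>y\<ge>y0. (eta1 has_real_derivative eta2 y) (at y within {y0..})"
    and eta2_cont: "continuous_on {y0..} eta2"
    and eta_pos: "\<forall>y\<ge>y0. eta y > 0"
    and Psi_le: "\<forall>y\<ge>y0. Psi_fun b ta d eta eta1 eta2 y \<le> 1"
    and at_nonpos: "\<forall>y\<ge>y0. ta y \<le> 0"
    and C: "C > 0"
    and abar: "\<forall>y\<ge>y0. ta y / eta y + ((b y)\<^sup>2 - 2 * d y) * eta1 y / (eta y)\<^sup>2 \<le> - C"
    and Psi_mono: "strict_mono_on {y0..} (Psi_fun b ta d eta eta1 eta2)"
    and eta_inf: "filterlim eta at_top at_top"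
    and Psi_lim: "((Psi_fun b ta d eta eta1 eta2) \<longlongrightarrow> 1) at_top"
    and eta1_lim: "((\<lambda>y. eta1 y / eta y) \<longlongrightarrow> 0) at_top"
  shows "((\<lambda>y. u1 y / u y) \<longlongrightarrow> 0) at_top"
proof -
  have in_E: "y \<in> E" if "y0 \<le> y" for y
  proof -
    have "Em < ereal y0"
      using y0 unfolding E_def Espace_def by simp
    also have "\<dots> \<le> ereal y"
      using that by simp
    finally show ?thesis
      unfolding E_def Espace_def by simp
  qed
  have at_eq: "at y within {y0..} = at y" if "y0 < y" for y
    using that by (intro at_within_interior) (simp add: interior_real_atLeast)
  show ?thesis
  proof (rule log_derivative_tendsto_zero[where B = b and D = d and M = "2 * (R + 1)"])
    fix y
    assume "y0 < y"
    then have "y0 \<le> y" "y \<in> E"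
      using in_E by auto
    show "(u has_real_derivative u1 y) (at y)" "(u1 has_real_derivative u2 y) (at y)"
      "(eta has_real_derivative eta1 y) (at y)"
      using u_d1 u_d2 eta_d1 \<open>y0 \<le> y\<close> at_eq[OF \<open>y0 < y\<close>] by auto
    show "0 < u y \<and> 0 < eta y" "b y \<noteq> 0"
      using u_pos eta_pos b_nz \<open>y0 \<le> y\<close> \<open>y \<in> E\<close> by auto
    show "(b y)\<^sup>2 / 2 \<le> d y \<and> 4 * (d y - (b y)\<^sup>2 / 2) \<le> 2 * (R + 1) * (b y)\<^sup>2"
      using d_fun_bounds[of R rho y b] R rho_bd \<open>y \<in> E\<close> unfolding d_def by auto
    show "0 = 1/2 * (b y)\<^sup>2 * u2 y + ta y * u1 y + eta y * u y - (u y)\<^sup>2 - d y * (u1 y)\<^sup>2 / u y"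
      "ta y / eta y + ((b y)\<^sup>2 - 2 * d y) * eta1 y / (eta y)\<^sup>2 \<le> - C"
      using u_ode abar \<open>y0 \<le> y\<close> by blast+
  qed (use C R u_lim eta1_lim in auto)
qed

end
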